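(* Under the setting below, for parameters $\gamma\in(0,1)$ and $\delta>0$, the policy $\mathcal P$ satisfies, for every $k\in\mathcal K$, $$\mathbb E\big[V_{\rm ESP}(\mathcal P)\big]\ge(1-\gamma)\Big(1-\frac\delta2\Big)V_{\rm ESP}(k)-\Phi(\epsilon,\delta,\gamma).$$
   Context: Fix integers $N,T\ge1$ and reals $\bar c>0$, $p_{\min}>0$, $\epsilon>0$, $\bar E\ge p_{\min}(1+\epsilon)$. For each $n\in\{1,\dots,N\}$ and $t\in\{1,\dots,T\}$ fix $c_{n,t}\in[0,\bar c]$ and a response function $z_{n,t}:[p_{\min},\infty)\to[0,1]$, fixed in advance (not depending on the policy's random choices). Let $K=\lfloor\log_{1+\epsilon}(\bar E/p_{\min})\rfloor$, $\mathcal K=\{1,\dots,K\}$, $p(k)=p_{\min}(1+\epsilon)^k$, $V_{t,n}(k)=p(k)\,c_{n,t}\,z_{n,t}(p(k))$, $V_{\rm ESP}(k)=\sum_{n=1}^N\sum_{t=1}^TV_{t,n}(k)$, and $\mathcal S=\sum_{i=1}^K(1+\epsilon)^i$. Policy $\mathcal P$ with parameters $\gamma\in(0,1)$, $\delta>0$: set $\omega_1(k)=1$ for all $k$. For $t=1,\dots,T$: let $h_t(k)=(1-\gamma)\frac{\omega_t(k)}{\sum_{j=1}^K\omega_t(j)}+\gamma\frac{(1+\epsilon)^k}{\mathcal S}$; for each $n$ independently draw $\kappa_{t,n}\in\mathcal K$ with $\Pr[\kappa_{t,n}=k]=h_t(k)$, offer price $p(\kappa_{t,n})$ and receive $V_{t,n}(\kappa_{t,n})$;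 write $\kappa_t=(\kappa_{t,n})_n$; for each $k$ let $V_t(k,\kappa_t)=\sum_{n=1}^NV_{t,n}(\kappa_{t,n})\mathbf 1\{\kappa_{t,n}=k\}$, $\hat V_t(k,\kappa_t)=\frac{V_t(k,\kappa_t)}{N\bar c\,p_{\min}}\cdot\frac{\gamma}{h_t(k)\,\mathcal S}$, and $\omega_{t+1}(k)=\omega_t(k)(1+\delta)^{\hat V_t(k,\kappa_t)}$. The policy's total revenue is $V_{\rm ESP}(\mathcal P)=\sum_{n=1}^N\sum_{t=1}^TV_{t,n}(\kappa_{t,n})$. Define $\Phi(\epsilon,\delta,\gamma)=\frac{1-\gamma}{\gamma}\cdot\frac{1+\epsilon}{\epsilon}\cdot\frac{N\bar E\bar c}{\delta}\cdot\ln\!\Big(\frac{\ln(\bar E/p_{\min})}{\ln(1+\epsilon)}\Big)$. *)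

theory Defs
  imports Complex_Main "HOL-Library.FuncSet"
begin

definition Kmax :: "real \<Rightarrow> real \<Rightarrow> real \<Rightarrow> nat" where
  "Kmax pmin eps Ebar = nat \<lfloor>log (1 + eps) (Ebar / pmin)\<rfloor>"

definition price :: "real \<Rightarrow> real \<Rightarrow> nat \<Rightarrow> real" where
  "price pmin eps k = pmin * (1 + eps) ^ k"

definition Vtn :: "real \<Rightarrow> real \<Rightarrow> (nat \<Rightarrow> nat \<Rightarrow> real) \<Rightarrow> (nat \<Rightarrow> nat \<Rightarrow> real \<Rightarrow> real)
    \<Rightarrow> nat \<Rightarrow> nat \<Rightarrow> nat \<Rightarrow> real" where
  "Vtn pmin eps c z t n k = price pmin eps k * c n t * z n t (price pmin eps k)"

definition V_ESP :: "nat \<Rightarrow> nat \<Rightarrow> real \<Rightarrow> real \<Rightarrow> (nat \<Rightarrow> nat \<Rightarrow> real) \<Rightarrow> (nat \<Rightarrow> nat \<Rightarrow> real \<Rightarrow> real)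
    \<Rightarrow> nat \<Rightarrow> real" where
  "V_ESP N T pmin eps c z k = (\<Sum>n=1..N. \<Sum>t=1..T. Vtn pmin eps c z t n k)"

definition Ssum :: "real \<Rightarrow> nat \<Rightarrow> real" where
  "Ssum eps K = (\<Sum>i=1..K. (1 + eps) ^ i)"

definition hdist :: "real \<Rightarrow> nat \<Rightarrow> real \<Rightarrow> (nat \<Rightarrow> real) \<Rightarrow> nat \<Rightarrow> real" where
  "hdist eps K gam w k =
     (1 - gam) * w k / (\<Sum>j=1..K. w j) + gam * (1 + eps) ^ k / Ssum eps K"

definition wupd :: "nat \<Rightarrow> real \<Rightarrow> real \<Rightarrow> real \<Rightarrow> (nat \<Rightarrow> nat \<Rightarrow> real) \<Rightarrow> (nat \<Rightarrow> nat \<Rightarrow> real \<Rightarrow> real)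
    \<Rightarrow> real \<Rightarrow> real \<Rightarrow> nat \<Rightarrow> nat \<Rightarrow> (nat \<Rightarrow> real) \<Rightarrow> (nat \<Rightarrow> nat) \<Rightarrow> nat \<Rightarrow> real" where
  "wupd N cbar pmin eps c z gam del K t w kappa k =
     (let Vt = (\<Sum>n=1..N. if kappa n = k then Vtn pmin eps c z t n (kappa n) else 0);
          Vhat = Vt / (real N * cbar * pmin) * (gam / (hdist eps K gam w k * Ssum eps K))
      in w k * (1 + del) powr Vhat)"

text \<open>Expected total revenue collected in the remaining m rounds, starting at round t with
  weights w: the expectation over the (adaptive) random draws, written out as a finite sum
  over all draw vectors of the current round weighted by their probability.\<close>
primrec exp_rev :: "nat \<Rightarrow> nat \<Rightarrow> real \<Rightarrow> real \<Rightarrow> real \<Rightarrow> (nat \<Rightarrow> nat \<Rightarrow> real) \<Rightarrow> (nat \<Rightarrow> nat \<Rightarrow> real \<Rightarrow> real)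
    \<Rightarrow> real \<Rightarrow> real \<Rightarrow> nat \<Rightarrow> nat \<Rightarrow> (nat \<Rightarrow> real) \<Rightarrow> real" where
  "exp_rev 0 N cbar pmin eps c z gam del K t w = 0"
| "exp_rev (Suc m) N cbar pmin eps c z gam del K t w =
     (\<Sum>kappa \<in> PiE {1..N} (\<lambda>_. {1..K}).
        (\<Prod>n=1..N. hdist eps K gam w (kappa n)) *
        ((\<Sum>n=1..N. Vtn pmin eps c z t n (kappa n)) +
         exp_rev m N cbar pmin eps c z gam del K (Suc t)
           (wupd N cbar pmin eps c z gam del K t w kappa)))"

definition policy_expected_revenue :: "nat \<Rightarrow> nat \<Rightarrow> real \<Rightarrow> real \<Rightarrow> real \<Rightarrow> real
    \<Rightarrow> (nat \<Rightarrow> nat \<Rightarrow> real) \<Rightarrow> (nat \<Rightarrow> nat \<Rightarrow> real \<Rightarrow> real) \<Rightarrow> real \<Rightarrow> real \<Rightarrow> real" where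
  "policy_expected_revenue N T cbar pmin eps Ebar c z gam del =
     exp_rev T N cbar pmin eps c z gam del (Kmax pmin eps Ebar) 1 (\<lambda>_. 1)"

definition Phi :: "nat \<Rightarrow> real \<Rightarrow> real \<Rightarrow> real \<Rightarrow> real \<Rightarrow> real \<Rightarrow> real \<Rightarrow> real" where
  "Phi N cbar pmin Ebar eps del gam =
     (1 - gam) / gam * ((1 + eps) / eps) * (real N * Ebar * cbar / del) *
     ln (ln (Ebar / pmin) / ln (1 + eps))"

end

theory Submission
  imports Defs "HOL-Analysis.Convex"
begin

text \<open>This is the Exp3 analysis with the potential \<open>ln W\<close>, \<open>W\<close> the total weight. The
  importance-weighted estimate of the revenue at each price level lies in \<open>[0, 1]\<close>, because the
  uniform exploration part of \<open>h\<close> is proportional to the price. Hence, by convexity of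
  \<open>x \<mapsto> (1 + \<delta>) powr x\<close> on \<open>[0, 1]\<close>, one round raises \<open>ln W\<close> by at most \<open>\<delta> / (1 - \<gamma>)\<close> times the
  scaled revenue actually collected. Since the estimate is unbiased, \<open>ln W\<close> also rises in
  expectation by at least \<open>ln (1 + \<delta>)\<close> times the scaled revenue of any fixed level \<open>k\<close>, up to the
  initial gap \<open>ln W\<^sub>1 - ln w\<^sub>1 k = ln K\<close>. Comparing the two, using \<open>ln (1 + \<delta>) \<ge> \<delta> - \<delta>\<^sup>2/2\<close> and
  \<open>ln K \<le> growth_rate \<cdot> \<Phi>\<close>, gives the bound.\<close>

lemma one_plus_powr_le_linear:
  fixes d x :: real
  assumes "0 < d" "0 \<le> x" "x \<le> 1"
  shows "(1 + d) powr x \<le> 1 + d * x"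
proof -
  have "exp ((1 - x) *\<^sub>R 0 + x *\<^sub>R ln (1 + d)) \<le> (1 - x) * exp 0 + x * exp (ln (1 + d))"
    using convex_onD[OF exp_convex, of x 0 "ln (1 + d)"] assms by auto
  thus ?thesis using assms by (simp add: powr_def algebra_simps)
qed

lemma ln_one_plus_ge_quadratic:
  fixes d :: real
  assumes "0 \<le> d"
  shows "d - d\<^sup>2 / 2 \<le> ln (1 + d)"
proof -
  let ?f = "\<lambda>x::real. ln (1 + x) - x + x\<^sup>2 / 2"
  have "?f 0 \<le> ?f d"
  proof (rule DERIV_nonneg_imp_nondecreasing[OF assms])
    fix x :: real assume x: "0 \<le> x" "x \<le> d"
    have "DERIV ?f x :> 1 / (1 + x) - 1 + x"
      using x by (auto intro!: derivative_eq_intros)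
    moreover have "1 / (1 + x) - 1 + x \<ge> 0"
      using x by (simp add: field_simps power2_eq_square)
    ultimately show "\<exists>y. DERIV ?f x :> y \<and> y \<ge> 0" by blast
  qed
  thus ?thesis by simp
qed

lemma sum_PiE_prod_eq_one:
  fixes p :: "'b \<Rightarrow> real"
  assumes "finite I" "finite A" "(\<Sum>a\<in>A. p a) = 1"
  shows "(\<Sum>g\<in>PiE I (\<lambda>_. A). \<Prod>i\<in>I. p (g i)) = 1"
  using prod_sum_PiE[OF assms(1), of "\<lambda>_. A" "\<lambda>_. p"] assms by simp

lemma sum_PiE_prod_coordinate:
  fixes p f :: "'b \<Rightarrow> real"
  assumes "finite I" "m \<in> I" "finite A" "(\<Sum>a\<in>A. p a) = 1"
  shows "(\<Sum>g\<in>PiE I (\<lambda>_. A). (\<Prod>i\<in>I. p (g i)) * f (g m)) = (\<Sum>a\<in>A. p a * f a)"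
proof -
  let ?q = "\<lambda>i a. p a * (if i = m then f a else 1)"
  have "(\<Sum>g\<in>PiE I (\<lambda>_. A). \<Prod>i\<in>I. ?q i (g i)) = (\<Prod>i\<in>I. \<Sum>a\<in>A. ?q i a)"
    by (rule prod_sum_PiE[symmetric]) (use assms in auto)
  also have "\<dots> = (\<Prod>i\<in>I. if i = m then (\<Sum>a\<in>A. p a * f a) else 1)"
    by (rule prod.cong) (auto simp: assms(4))
  also have "\<dots> = (\<Sum>a\<in>A. p a * f a)"
    using assms by (simp add: prod.delta)
  finally show ?thesis
    using assms by (simp add: prod.distrib prod.delta)
qed

locale posted_price_setting =
  fixes N T :: nat and cbar pmin eps Ebar gam del :: real
    and c :: "nat \<Rightarrow> nat \<Rightarrow> real" and z :: "nat \<Rightarrow> nat \<Rightarrow> real \<Rightarrow> real"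
  assumes N_pos: "N \<ge> 1"
    and cbar_pos: "cbar > 0" and pmin_pos: "pmin > 0" and eps_pos: "eps > 0"
    and Ebar_ge: "Ebar \<ge> pmin * (1 + eps)"
    and c_bounds: "\<And>n t. n \<in> {1..N} \<Longrightarrow> t \<in> {1..T} \<Longrightarrow> 0 \<le> c n t \<and> c n t \<le> cbar"
    and z_bounds: "\<And>n t x. n \<in> {1..N} \<Longrightarrow> t \<in> {1..T} \<Longrightarrow> x \<ge> pmin \<Longrightarrow> 0 \<le> z n t x \<and> z n t x \<le> 1"
    and gam_pos: "0 < gam" and gam_less_one: "gam < 1" and del_pos: "del > 0"
begin

abbreviation K where "K \<equiv> Kmax pmin eps Ebar"
abbreviation S where "S \<equiv> Ssum eps K"
abbreviation V where "V \<equiv> Vtn pmin eps c z"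
abbreviation h where "h \<equiv> hdist eps K gam"
abbreviation draws where "draws \<equiv> PiE {1..N} (\<lambda>_. {1..K})"
abbreviation draw_prob where "draw_prob w kap \<equiv> \<Prod>n=1..N. h w (kap n)"
abbreviation round_revenue where "round_revenue t kap \<equiv> \<Sum>n=1..N. V t n (kap n)"
abbreviation next_weights where "next_weights \<equiv> wupd N cbar pmin eps c z gam del K"
abbreviation expected_revenue where "expected_revenue m \<equiv> exp_rev m N cbar pmin eps c z gam del K"

definition total_weight :: "(nat \<Rightarrow> real) \<Rightarrow> real" where
  "total_weight w = (\<Sum>j=1..K. w j)"

definition estimate_scale :: real where
  "estimate_scale = gam / (real N * cbar * pmin * S)"

definition growth_rate :: real where
  "growth_rate = del / (1 - gam) * estimate_scale"

definition level_revenue :: "nat \<Rightarrow> (nat \<Rightarrow> nat) \<Rightarrow> nat \<Rightarrow> real" where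
  "level_revenue t kap j = (\<Sum>n=1..N. if kap n = j then V t n j else 0)"

definition revenue_estimate :: "nat \<Rightarrow> (nat \<Rightarrow> real) \<Rightarrow> (nat \<Rightarrow> nat) \<Rightarrow> nat \<Rightarrow> real" where
  "revenue_estimate t w kap j = estimate_scale * level_revenue t kap j / h w j"

lemma log_price_range_ge_one: "log (1 + eps) (Ebar / pmin) \<ge> 1"
proof -
  have "Ebar / pmin \<ge> 1 + eps" using Ebar_ge pmin_pos by (simp add: field_simps)
  hence "log (1 + eps) (Ebar / pmin) \<ge> log (1 + eps) (1 + eps)"
    using eps_pos by (subst log_le_cancel_iff) auto
  thus ?thesis using eps_pos by simp
qed

lemma K_le_log: "real K \<le> log (1 + eps) (Ebar / pmin)"
  using log_price_range_ge_one unfolding Kmax_def by linarith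

lemma K_ge_one: "K \<ge> 1"
  using log_price_range_ge_one unfolding Kmax_def by linarith

lemma S_pos: "S > 0"
  unfolding Ssum_def using K_ge_one eps_pos by (intro sum_pos) auto

lemma estimate_scale_pos: "estimate_scale > 0"
  unfolding estimate_scale_def using gam_pos N_pos cbar_pos pmin_pos S_pos by simp

lemma growth_rate_pos: "growth_rate > 0"
  unfolding growth_rate_def using del_pos gam_less_one estimate_scale_pos by simp

lemma price_ge_pmin: "price pmin eps j \<ge> pmin"
  unfolding price_def using pmin_pos eps_pos by (simp add: one_le_power)

lemma V_bounds:
  assumes "n \<in> {1..N}" "t \<in> {1..T}"
  shows "0 \<le> V t n j" "V t n j \<le> price pmin eps j * cbar"
proof -
  have p: "price pmin eps j \<ge> pmin" by (rule price_ge_pmin)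
  note cz = c_bounds[OF assms] z_bounds[OF assms p]
  show "0 \<le> V t n j" unfolding Vtn_def using p pmin_pos cz by simp
  have "c n t * z n t (price pmin eps j) \<le> cbar * 1" using cz by (intro mult_mono) auto
  thus "V t n j \<le> price pmin eps j * cbar"
    unfolding Vtn_def using p pmin_pos by (simp add: mult.assoc mult_left_mono)
qed

lemma total_weight_pos:
  assumes "\<forall>j\<in>{1..K}. 0 < w j"
  shows "total_weight w > 0"
  unfolding total_weight_def using K_ge_one assms by (intro sum_pos) auto

lemma hdist_sum_eq_one:
  assumes "\<forall>j\<in>{1..K}. 0 < w j"
  shows "(\<Sum>j=1..K. h w j) = 1"
proof -
  have "(\<Sum>j=1..K. h w j)
      = (1 - gam) / total_weight w * (\<Sum>j=1..K. w j) + gam / S * (\<Sum>j=1..K. (1 + eps) ^ j)"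
    unfolding hdist_def total_weight_def by (simp add: sum.distrib sum_distrib_left)
  thus ?thesis using total_weight_pos[OF assms] S_pos unfolding total_weight_def Ssum_def by simp
qed

lemma hdist_lower_bounds:
  assumes "\<forall>j\<in>{1..K}. 0 < w j" and "j \<in> {1..K}"
  shows "(1 - gam) * w j / total_weight w \<le> h w j" "gam * (1 + eps) ^ j / S \<le> h w j"
proof -
  have "0 \<le> (1 - gam) * w j / total_weight w"
    using gam_less_one assms total_weight_pos[OF assms(1)] by (simp add: less_imp_le)
  moreover have "0 \<le> gam * (1 + eps) ^ j / S" using gam_pos eps_pos S_pos by simp
  ultimately show "(1 - gam) * w j / total_weight w \<le> h w j" "gam * (1 + eps) ^ j / S \<le> h w j"
    unfolding hdist_def total_weight_def by simp_all
qed

lemma hdist_pos: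
  assumes "\<forall>j\<in>{1..K}. 0 < w j" and "j \<in> {1..K}"
  shows "h w j > 0"
  using hdist_lower_bounds(2)[OF assms] gam_pos eps_pos S_pos
  by (smt (verit) divide_pos_pos mult_pos_pos zero_less_power)

lemma next_weights_eq:
  "next_weights t w kap j = w j * (1 + del) powr revenue_estimate t w kap j"
proof -
  have "(\<Sum>n=1..N. if kap n = j then V t n (kap n) else 0) = level_revenue t kap j"
    unfolding level_revenue_def by (rule sum.cong) auto
  moreover have "x / (real N * cbar * pmin) * (gam / (h w j * S)) = estimate_scale * x / h w j" for x
    unfolding estimate_scale_def by (simp add: mult_ac)
  ultimately show ?thesis
    unfolding wupd_def revenue_estimate_def Let_def by simp
qed

lemma level_revenue_bounds:
  assumes "t \<in> {1..T}"
  shows "0 \<le> level_revenue t kap j" "level_revenue t kap j \<le> real N * (price pmin eps j * cbar)"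
proof -
  show "0 \<le> level_revenue t kap j"
    unfolding level_revenue_def using V_bounds(1) assms by (intro sum_nonneg) auto
  have "0 \<le> price pmin eps j * cbar"
    using price_ge_pmin[of j] pmin_pos cbar_pos by simp
  hence "level_revenue t kap j \<le> (\<Sum>n=1..N. price pmin eps j * cbar)"
    unfolding level_revenue_def using V_bounds(2) assms by (intro sum_mono) auto
  thus "level_revenue t kap j \<le> real N * (price pmin eps j * cbar)" by simp
qed

lemma revenue_estimate_bounds:
  assumes "t \<in> {1..T}" "\<forall>j\<in>{1..K}. 0 < w j" "j \<in> {1..K}"
  shows "0 \<le> revenue_estimate t w kap j" "revenue_estimate t w kap j \<le> 1"
proof -
  have hj: "0 < h w j" "gam * (1 + eps) ^ j / S \<le> h w j"
    using hdist_pos[OF assms(2,3)] hdist_lower_bounds(2)[OF assms(2,3)] by auto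
  note L = level_revenue_bounds[OF assms(1), of kap j]
  show "0 \<le> revenue_estimate t w kap j"
    unfolding revenue_estimate_def using L hj estimate_scale_pos by simp
  have "revenue_estimate t w kap j \<le> estimate_scale * (real N * (price pmin eps j * cbar)) / h w j"
    unfolding revenue_estimate_def using L hj estimate_scale_pos
    by (intro divide_right_mono mult_left_mono) auto
  also have "\<dots> = (gam * (1 + eps) ^ j / S) / h w j"
    unfolding estimate_scale_def price_def using N_pos cbar_pos pmin_pos by (simp add: field_simps)
  also have "\<dots> \<le> 1" using hj by (subst divide_le_eq_1_pos) auto
  finally show "revenue_estimate t w kap j \<le> 1" .
qed

lemma sum_level_revenue:
  assumes "kap \<in> draws"
  shows "(\<Sum>j=1..K. level_revenue t kap j) = round_revenue t kap"
proof -
  have "(\<Sum>j=1..K. level_revenue t kap j) = (\<Sum>n=1..N. \<Sum>j=1..K. if kap n = j then V t n j else 0)"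
    unfolding level_revenue_def by (rule sum.swap)
  also have "\<dots> = round_revenue t kap"
    using assms by (intro sum.cong refl) (auto simp: sum.delta PiE_iff)
  finally show ?thesis .
qed

lemma expected_revenue_estimate:
  assumes "\<forall>j\<in>{1..K}. 0 < w j" "k \<in> {1..K}"
  shows "(\<Sum>kap\<in>draws. draw_prob w kap * revenue_estimate t w kap k)
       = estimate_scale * (\<Sum>n=1..N. V t n k)"
proof -
  define f where "f n j = (if j = k then V t n k else 0)" for n j
  have "(\<Sum>kap\<in>draws. draw_prob w kap * revenue_estimate t w kap k)
      = estimate_scale / h w k * (\<Sum>n=1..N. \<Sum>kap\<in>draws. draw_prob w kap * f n (kap n))"
    unfolding revenue_estimate_def level_revenue_def f_def
    by (subst sum.swap) (simp add: sum_distrib_left sum_divide_distrib mult_ac)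
  also have "\<dots> = estimate_scale / h w k * (\<Sum>n=1..N. \<Sum>j=1..K. h w j * f n j)"
    using hdist_sum_eq_one[OF assms(1)] by (simp add: sum_PiE_prod_coordinate)
  also have "\<dots> = estimate_scale / h w k * (\<Sum>n=1..N. h w k * V t n k)"
    using assms(2) by (simp add: f_def if_distrib sum.delta' cong: if_cong)
  also have "\<dots> = estimate_scale * (\<Sum>n=1..N. V t n k)"
    using hdist_pos[OF assms] by (simp add: sum_distrib_left)
  finally show ?thesis .
qed

text \<open>Convexity of \<open>(1 + \<delta>)\<^sup>x\<close> on \<open>[0, 1]\<close>, then \<open>w j \<le> W h j / (1 - \<gamma>)\<close>, which cancels the
  importance weight \<open>1 / h j\<close> of the estimate.\<close>
lemma total_weight_next_le:
  assumes t: "t \<in> {1..T}" and kap: "kap \<in> draws" and w: "\<forall>j\<in>{1..K}. 0 < w j"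
  shows "total_weight (next_weights t w kap) \<le> total_weight w * (1 + growth_rate * round_revenue t kap)"
proof -
  let ?W = "total_weight w"
  let ?est = "revenue_estimate t w kap"
  have est_le: "w j * ?est j \<le> ?W / (1 - gam) * estimate_scale * level_revenue t kap j"
    if j: "j \<in> {1..K}" for j
  proof -
    have "w j \<le> ?W / (1 - gam) * h w j"
      using hdist_lower_bounds(1)[OF w j] total_weight_pos[OF w] gam_less_one
      by (simp add: field_simps)
    hence "w j * ?est j \<le> ?W / (1 - gam) * h w j * ?est j"
      using revenue_estimate_bounds(1)[OF t w j] by (rule mult_right_mono)
    also have "\<dots> = ?W / (1 - gam) * estimate_scale * level_revenue t kap j"
      unfolding revenue_estimate_def using hdist_pos[OF w j] by simp
    finally show ?thesis .
  qed
  have "total_weight (next_weights t w kap) = (\<Sum>j=1..K. w j * (1 + del) powr ?est j)"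
    unfolding total_weight_def next_weights_eq ..
  also have "\<dots> \<le> (\<Sum>j=1..K. w j * (1 + del * ?est j))"
    using one_plus_powr_le_linear[OF del_pos] revenue_estimate_bounds[OF t w] w
    by (intro sum_mono mult_left_mono) (auto simp: less_imp_le)
  also have "\<dots> = ?W + del * (\<Sum>j=1..K. w j * ?est j)"
    unfolding total_weight_def by (simp add: algebra_simps sum.distrib sum_distrib_left)
  also have "\<dots> \<le> ?W + del * (\<Sum>j=1..K. ?W / (1 - gam) * estimate_scale * level_revenue t kap j)"
    using est_le del_pos by (intro add_left_mono mult_left_mono sum_mono) auto
  also have "\<dots> = ?W * (1 + growth_rate * round_revenue t kap)"
    unfolding growth_rate_def sum_distrib_left[symmetric] sum_level_revenue[OF kap]
    by (simp add: algebra_simps)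
  finally show ?thesis .
qed

lemma ln_total_weight_next_le:
  assumes t: "t \<in> {1..T}" and kap: "kap \<in> draws" and w: "\<forall>j\<in>{1..K}. 0 < w j"
  shows "ln (total_weight (next_weights t w kap)) \<le> ln (total_weight w) + growth_rate * round_revenue t kap"
proof -
  have R: "0 \<le> growth_rate * round_revenue t kap"
    using growth_rate_pos V_bounds(1) t kap by (intro mult_nonneg_nonneg sum_nonneg) auto
  have "0 < total_weight (next_weights t w kap)"
    using w del_pos by (intro total_weight_pos) (simp add: next_weights_eq)
  hence "ln (total_weight (next_weights t w kap)) \<le> ln (total_weight w * (1 + growth_rate * round_revenue t kap))"
    using total_weight_next_le[OF assms] by simp
  also have "\<dots> = ln (total_weight w) + ln (1 + growth_rate * round_revenue t kap)"
    using total_weight_pos[OF w] R by (simp add: ln_mult)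
  also have "\<dots> \<le> ln (total_weight w) + growth_rate * round_revenue t kap"
    using R by (simp add: ln_add_one_self_le_self)
  finally show ?thesis .
qed

lemma expectation_over_draws_ge:
  assumes w: "\<forall>j\<in>{1..K}. 0 < w j" and k: "k \<in> {1..K}"
    and F: "\<And>kap. kap \<in> draws \<Longrightarrow> X + L * revenue_estimate t w kap k \<le> F kap"
  shows "X + L * estimate_scale * (\<Sum>n=1..N. V t n k) \<le> (\<Sum>kap\<in>draws. draw_prob w kap * F kap)"
proof -
  have P: "0 \<le> draw_prob w kap" if "kap \<in> draws" for kap
    using that hdist_pos[OF w] by (intro prod_nonneg) (auto simp: PiE_iff less_imp_le)
  have "(\<Sum>kap\<in>draws. draw_prob w kap) = 1"
    using hdist_sum_eq_one[OF w] by (intro sum_PiE_prod_eq_one) auto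
  hence "X + L * estimate_scale * (\<Sum>n=1..N. V t n k)
      = (\<Sum>kap\<in>draws. draw_prob w kap * (X + L * revenue_estimate t w kap k))"
    using expected_revenue_estimate[OF w k]
    by (simp add: algebra_simps sum.distrib sum_distrib_left[symmetric] sum_distrib_right[symmetric])
  also have "\<dots> \<le> (\<Sum>kap\<in>draws. draw_prob w kap * F kap)"
    using F P by (intro sum_mono mult_left_mono) auto
  finally show ?thesis .
qed

lemma expected_revenue_potential_bound:
  assumes "1 \<le> t" "t + m \<le> T + 1" "\<forall>j\<in>{1..K}. 0 < w j" "k \<in> {1..K}"
  shows "ln (1 + del) * estimate_scale * (\<Sum>s=t..<t+m. \<Sum>n=1..N. V s n k) + ln (w k)
       \<le> growth_rate * expected_revenue m t w + ln (total_weight w)"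
  using assms
proof (induction m arbitrary: t w)
  case 0
  have "w k \<le> total_weight w"
    unfolding total_weight_def using 0 by (intro member_le_sum) (auto simp: less_imp_le)
  moreover have "0 < w k" using "0.prems" by auto
  ultimately show ?case by simp
next
  case (Suc m)
  let ?L = "ln (1 + del)"
  let ?rest = "\<Sum>s=Suc t..<Suc t+m. \<Sum>n=1..N. V s n k"
  let ?F = "\<lambda>kap. growth_rate * (round_revenue t kap + expected_revenue m (Suc t) (next_weights t w kap))"
  have t: "t \<in> {1..T}" using Suc.prems by auto
  have "?L * estimate_scale * ?rest + ln (w k) - ln (total_weight w)
        + ?L * estimate_scale * (\<Sum>n=1..N. V t n k)
      \<le> (\<Sum>kap\<in>draws. draw_prob w kap * ?F kap)"
  proof (rule expectation_over_draws_ge[OF Suc.prems(3,4)])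
    fix kap assume kap: "kap \<in> draws"
    have w': "\<forall>j\<in>{1..K}. 0 < next_weights t w kap j"
      using Suc.prems(3) del_pos by (simp add: next_weights_eq)
    have "0 < w k" using Suc.prems(3,4) by blast
    hence "ln (next_weights t w kap k) = ln (w k) + ?L * revenue_estimate t w kap k"
      using del_pos by (simp add: next_weights_eq ln_mult ln_powr)
    thus "?L * estimate_scale * ?rest + ln (w k) - ln (total_weight w)
          + ?L * revenue_estimate t w kap k \<le> ?F kap"
      using Suc.IH[of "Suc t" "next_weights t w kap"] w' Suc.prems
        ln_total_weight_next_le[OF t kap Suc.prems(3)]
      by (simp add: algebra_simps)
  qed
  moreover have "growth_rate * expected_revenue (Suc m) t w = (\<Sum>kap\<in>draws. draw_prob w kap * ?F kap)"
    by (simp add: sum_distrib_left mult_ac)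
  moreover have "(\<Sum>s=t..<t+Suc m. \<Sum>n=1..N. V s n k) = (\<Sum>n=1..N. V t n k) + ?rest"
    by (subst sum.atLeast_Suc_lessThan) auto
  ultimately show ?case by (simp add: algebra_simps)
qed

lemma power_K_le: "(1 + eps) ^ K \<le> Ebar / pmin"
proof -
  have "Ebar > 0" using Ebar_ge pmin_pos eps_pos by (smt (verit) mult_pos_pos)
  have "(1 + eps) ^ K = (1 + eps) powr real K" using eps_pos by (simp add: powr_realpow)
  also have "\<dots> \<le> (1 + eps) powr log (1 + eps) (Ebar / pmin)"
    using K_le_log eps_pos by (intro powr_mono) auto
  also have "\<dots> = Ebar / pmin" using \<open>Ebar > 0\<close> eps_pos pmin_pos by simp
  finally show ?thesis .
qed

lemma pmin_S_le: "pmin * S \<le> (1 + eps) / eps * Ebar"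
proof -
  have "(1 - (1 + eps)) * S = (1 + eps) ^ 1 - (1 + eps) ^ Suc K"
    unfolding Ssum_def using K_ge_one by (rule sum_gp_multiplied)
  hence "eps * S = (1 + eps) * (1 + eps) ^ K - (1 + eps)" by simp
  also have "\<dots> \<le> (1 + eps) * (Ebar / pmin)"
    using mult_left_mono[OF power_K_le, of "1 + eps"] eps_pos by simp
  finally show ?thesis using eps_pos pmin_pos by (simp add: field_simps)
qed

lemma ln_K_le_growth_rate_Phi: "ln (real K) \<le> growth_rate * Phi N cbar pmin Ebar eps del gam"
proof -
  let ?LL = "ln (ln (Ebar / pmin) / ln (1 + eps))"
  have lnK: "ln (real K) \<le> ?LL"
    using K_le_log K_ge_one unfolding log_def by simp
  have "0 \<le> ln (real K)" using K_ge_one by simp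
  moreover have "1 \<le> (1 + eps) * Ebar / (eps * (pmin * S))"
    using pmin_S_le eps_pos pmin_pos S_pos by (simp add: field_simps)
  ultimately have "ln (real K) \<le> (1 + eps) * Ebar / (eps * (pmin * S)) * ?LL"
    using lnK by (smt (verit) mult_le_cancel_right1)
  also have "\<dots> = growth_rate * Phi N cbar pmin Ebar eps del gam"
    unfolding growth_rate_def estimate_scale_def Phi_def
    using gam_pos gam_less_one N_pos cbar_pos pmin_pos S_pos del_pos eps_pos
    by (simp add: field_simps)
  finally show ?thesis .
qed

lemma policy_expected_revenue_ge:
  assumes k: "k \<in> {1..K}"
  shows "(1 - gam) * (1 - del / 2) * V_ESP N T pmin eps c z k - Phi N cbar pmin Ebar eps del gam
       \<le> policy_expected_revenue N T cbar pmin eps Ebar c z gam del"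
proof -
  let ?V = "V_ESP N T pmin eps c z k"
  let ?E = "policy_expected_revenue N T cbar pmin eps Ebar c z gam del"
  have "(\<Sum>s=1..<1+T. \<Sum>n=1..N. V s n k) = ?V"
    unfolding V_ESP_def by (subst sum.swap) (simp add: atLeastLessThanSuc_atLeastAtMost)
  hence potential: "ln (1 + del) * estimate_scale * ?V \<le> growth_rate * ?E + ln (real K)"
    using expected_revenue_potential_bound[of 1 T "\<lambda>_. 1" k] k
    unfolding policy_expected_revenue_def total_weight_def by simp
  have "0 \<le> ?V" unfolding V_ESP_def using V_bounds(1) by (intro sum_nonneg) auto
  moreover have "growth_rate * ((1 - gam) * (1 - del / 2)) = (del - del\<^sup>2 / 2) * estimate_scale"
    unfolding growth_rate_def using gam_less_one by (simp add: field_simps power2_eq_square)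
  ultimately have "growth_rate * ((1 - gam) * (1 - del / 2) * ?V) \<le> ln (1 + del) * estimate_scale * ?V"
    using ln_one_plus_ge_quadratic[of del] del_pos estimate_scale_pos
    by (simp add: mult.assoc[symmetric] mult_right_mono)
  hence "growth_rate * ((1 - gam) * (1 - del / 2) * ?V - Phi N cbar pmin Ebar eps del gam)
      \<le> growth_rate * ?E"
    using potential ln_K_le_growth_rate_Phi by (simp add: right_diff_distrib)
  thus ?thesis using growth_rate_pos by simp
qed

end

theorem lemma7:
  fixes N T :: nat and cbar pmin eps Ebar gam del :: real
    and c :: "nat \<Rightarrow> nat \<Rightarrow> real" and z :: "nat \<Rightarrow> nat \<Rightarrow> real \<Rightarrow> real" and k :: nat
  assumes "N \<ge> 1" and "T \<ge> 1"
    and "cbar > 0" and "pmin > 0" and "eps > 0" and "Ebar \<ge> pmin * (1 + eps)"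
    and "\<And>n t. n \<in> {1..N} \<Longrightarrow> t \<in> {1..T} \<Longrightarrow> 0 \<le> c n t \<and> c n t \<le> cbar"
    and "\<And>n t x. n \<in> {1..N} \<Longrightarrow> t \<in> {1..T} \<Longrightarrow> x \<ge> pmin \<Longrightarrow> 0 \<le> z n t x \<and> z n t x \<le> 1"
    and "0 < gam" and "gam < 1" and "del > 0"
    and "k \<in> {1..Kmax pmin eps Ebar}"
  shows "policy_expected_revenue N T cbar pmin eps Ebar c z gam del
           \<ge> (1 - gam) * (1 - del / 2) * V_ESP N T pmin eps c z k - Phi N cbar pmin Ebar eps del gam"
proof -
  interpret posted_price_setting N T cbar pmin eps Ebar gam del c z
    using assms by unfold_locales auto
  show ?thesis using policy_expected_revenue_ge[OF assms(12)] by simp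
qed

end
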